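(* Let $k,n$ be positive integers and suppose there exist complex $k\times n$ matrices $A_1,\dots,A_k$ such that $A_iA_i^t=I_k$ for every $i\in[k]$ and $A_iA_j^t=-A_jA_i^t$ for all distinct $i,j\in[k]$. Then there exists an anticommuting family $e_1,\dots,e_k\in\mathbb{C}^{(n+2k)\times(n+2k)}$ such that $\mathrm{rk}(e_i^2)=k$ for every $i$, $e_1^2=e_2^2=\dots=e_k^2$, and $e_i^3=0$ for every $i$.
   Context: A family $e_1,\dots,e_k$ of complex square matrices is called anticommuting if $e_ie_j=-e_je_i$ for all distinct $i,j$. $A^t$ denotes the transpose; $\mathrm{rk}$ is matrix rank. *)

theory Defs
  imports "Jordan_Normal_Form.DL_Rank"
begin

end

theory Submission
  imports Defs
begin

text \<open>Split \<open>\<complex>\<^bsup>n+2k\<^esup>\<close> into coordinate blocks of sizes \<open>k, n, k\<close> and let \<open>e\<^sub>i\<close> be the block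
  matrix with \<open>A\<^sub>i\<close> in position (1,2), \<open>A\<^sub>i\<^sup>T\<close> in position (2,3) and zeros elsewhere. Then
  \<open>e\<^sub>i e\<^sub>j\<close> has the single nonzero block \<open>A\<^sub>i A\<^sub>j\<^sup>T\<close> in position (1,3), so the relations on the
  \<open>A\<^sub>i\<close> become anticommutation of the \<open>e\<^sub>i\<close>, every \<open>e\<^sub>i\<^sup>2\<close> is the same rank-\<open>k\<close> matrix with
  the identity in position (1,3), and all products of three such matrices vanish.\<close>

text \<open>The rows of \<open>proj_mat m l a\<close> are the unit vectors \<open>e\<^sub>a, \<dots>, e\<^sub>a\<^sub>+\<^sub>m\<^sub>-\<^sub>1\<close> of length \<open>l\<close>:
  it extracts the coordinates \<open>a, \<dots>, a + m - 1\<close>, and its transpose is the matching inclusion.\<close>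

definition proj_mat :: "nat \<Rightarrow> nat \<Rightarrow> nat \<Rightarrow> 'a :: zero_neq_one mat" where
  "proj_mat m l a = mat m l (\<lambda>(r, c). if c = r + a then 1 else 0)"

lemma proj_mat_carrier [simp]: "proj_mat m l a \<in> carrier_mat m l"
  by (simp add: proj_mat_def)

lemma dim_proj_mat [simp]: "dim_row (proj_mat m l a) = m" "dim_col (proj_mat m l a) = l"
  by (simp_all add: proj_mat_def)

lemma row_proj_mat:
  "r < m \<Longrightarrow> row (proj_mat m l a) r = (if r + a < l then unit_vec l (r + a) else 0\<^sub>v l)"
  by (rule eq_vecI) (auto simp: proj_mat_def)

lemma col_proj_mat:
  "c < l \<Longrightarrow> col (proj_mat m l a) c = (if a \<le> c \<and> c - a < m then unit_vec m (c - a) else 0\<^sub>v m)"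
  by (rule eq_vecI) (auto simp: proj_mat_def)

lemma proj_mat_mult_transpose_self:
  "m + a \<le> l \<Longrightarrow> proj_mat m l a * (proj_mat m l a)\<^sup>T = (1\<^sub>m m :: 'a :: semiring_1 mat)"
  by (rule eq_matI) (auto simp: row_proj_mat)

lemma proj_mat_mult_transpose_disjoint:
  "m + a \<le> b \<or> m' + b \<le> a \<Longrightarrow> proj_mat m l a * (proj_mat m' l b)\<^sup>T = (0\<^sub>m m m' :: 'a :: semiring_1 mat)"
  by (rule eq_matI) (auto simp: row_proj_mat)

lemma transpose_proj_mat_mult_proj_mat:
  assumes "l' \<le> m + b"
  shows "(proj_mat m l 0)\<^sup>T * proj_mat m l' b = (proj_mat l l' b :: 'a :: semiring_1 mat)"
proof (rule eq_matI)
  fix r c assume r: "r < dim_row (proj_mat l l' b :: 'a mat)" and c: "c < dim_col (proj_mat l l' b :: 'a mat)"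
  have "c = r + b \<Longrightarrow> r < m" using c assms by simp
  then show "((proj_mat m l 0)\<^sup>T * proj_mat m l' b) $$ (r, c) = (proj_mat l l' b :: 'a mat) $$ (r, c)"
    using r c by (auto simp: col_proj_mat proj_mat_def[of l l' b])
qed auto

lemma (in vec_space) rank_eq_card_lin_indpt_cols:
  assumes A: "A \<in> carrier_mat n nc" and indpt: "lin_indpt U"
    and U_cols: "U \<subseteq> set (cols A)" and cols_U: "set (cols A) \<subseteq> insert (0\<^sub>v n) U"
  shows "rank A = card U"
proof (rule rank_card_indpt[OF A])
  show "maximal U (\<lambda>T. T \<subseteq> set (cols A) \<and> lin_indpt T)"
    unfolding maximal_def
  proof (intro conjI allI impI U_cols indpt)
    fix T assume T: "U \<subseteq> T \<and> T \<subseteq> set (cols A) \<and> lin_indpt T"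
    have "0\<^sub>v n \<notin> T"
    proof
      assume "0\<^sub>v n \<in> T"
      then have "lin_dep T"
        by (intro zero_lin_dep) (auto simp: set_eq_iff intro: exI[of _ 1])
      then show False using T by blast
    qed
    then show "T = U" using T cols_U by blast
  qed
qed

lemma rank_proj_mat: "vec_space.rank m (proj_mat m l a :: 'a :: field mat) = min m (l - a)"
proof -
  interpret vec_space "TYPE('a)" m .
  define P :: "'a mat" where "P = proj_mat m l a"
  define U :: "'a vec set" where "U = unit_vec m ` {..<min m (l - a)}"
  have cols: "set (cols P) = col P ` {..<l}"
    by (auto simp: cols_def P_def)
  have "rank P = card U"
  proof (rule rank_eq_card_lin_indpt_cols)
    show "P \<in> carrier_mat m l" by (simp add: P_def)
    have "lin_indpt (set (unit_vecs m))"
      using unit_vecs_basis by (simp add: basis_def)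
    then show "lin_indpt U"
      by (rule subset_li_is_li) (auto simp: U_def unit_vecs_def)
    show "U \<subseteq> set (cols P)"
    proof
      fix v assume "v \<in> U"
      then obtain r where "r < min m (l - a)" "v = unit_vec m r" by (auto simp: U_def)
      then have "v = col P (r + a)" "r + a < l" by (auto simp: col_proj_mat P_def)
      then show "v \<in> set (cols P)" unfolding cols by blast
    qed
    show "set (cols P) \<subseteq> insert (0\<^sub>v m) U"
    proof
      fix v assume "v \<in> set (cols P)"
      then obtain c where c: "c < l" "v = col P c" unfolding cols by blast
      show "v \<in> insert (0\<^sub>v m) U"
      proof (cases "a \<le> c \<and> c - a < m")
        case True
        then have "c - a < min m (l - a)" using c by auto
        then show ?thesis using True c by (simp add: col_proj_mat P_def U_def)
      next
        case False
        then have "col P c = 0\<^sub>v m" using c(1) by (simp add: col_proj_mat P_def)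
        then show ?thesis using c(2) by simp
      qed
    qed
  qed
  also have "card U = min m (l - a)"
    unfolding U_def by (subst card_image) (auto intro!: inj_onI)
  finally show ?thesis by (simp add: P_def)
qed

lemma mult_sandwich_mat:
  fixes A :: "'a :: semiring_1 mat"
  assumes A: "A \<in> carrier_mat a b" and X: "X \<in> carrier_mat b c" and B: "B \<in> carrier_mat c d"
    and C: "C \<in> carrier_mat d e" and Y: "Y \<in> carrier_mat e f" and D: "D \<in> carrier_mat f g"
  shows "A * X * B * (C * Y * D) = A * (X * (B * C) * Y) * D"
proof -
  have AX: "A * X \<in> carrier_mat a c" and AXB: "A * X * B \<in> carrier_mat a d"
    and CY: "C * Y \<in> carrier_mat d f" and BC: "B * C \<in> carrier_mat c e"
    and XBC: "X * (B * C) \<in> carrier_mat b e"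
    using assms by auto
  have "A * X * B * (C * Y * D) = A * X * B * (C * Y) * D"
    by (rule assoc_mult_mat[OF AXB CY D, symmetric])
  also have "A * X * B * (C * Y) = A * X * B * C * Y"
    by (rule assoc_mult_mat[OF AXB C Y, symmetric])
  also have "A * X * B * C = A * (X * (B * C))"
    using assoc_mult_mat[OF AX B C] assoc_mult_mat[OF A X BC] by simp
  also have "A * (X * (B * C)) * Y = A * (X * (B * C) * Y)"
    by (rule assoc_mult_mat[OF A XBC Y])
  finally show ?thesis .
qed

text \<open>With respect to the coordinate blocks of sizes \<open>k, n, k\<close> this is
  \<open>[[0, M, 0], [0, 0, M\<^sup>T], [0, 0, 0]]\<close>.\<close>

definition upper_block_mat :: "nat \<Rightarrow> nat \<Rightarrow> 'a :: comm_ring_1 mat \<Rightarrow> 'a mat" where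
  "upper_block_mat k n M =
     (proj_mat k (n + 2*k) 0)\<^sup>T * M * proj_mat n (n + 2*k) k +
     (proj_mat n (n + 2*k) k)\<^sup>T * M\<^sup>T * proj_mat k (n + 2*k) (k + n)"

lemma upper_block_mat_carrier:
  "M \<in> carrier_mat k n \<Longrightarrow> upper_block_mat k n M \<in> carrier_mat (n + 2*k) (n + 2*k)"
  unfolding upper_block_mat_def by (intro add_carrier_mat mult_carrier_mat) auto

lemma upper_block_mat_mult:
  fixes M M' :: "'a :: comm_ring_1 mat"
  assumes M: "M \<in> carrier_mat k n" and M': "M' \<in> carrier_mat k n"
  shows "upper_block_mat k n M * upper_block_mat k n M' =
    (proj_mat k (n + 2*k) 0)\<^sup>T * (M * M'\<^sup>T) * proj_mat k (n + 2*k) (k + n)"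
proof -
  let ?N = "n + 2*k"
  let ?inc1 = "(proj_mat k ?N 0)\<^sup>T :: 'a mat" and ?inc2 = "(proj_mat n ?N k)\<^sup>T :: 'a mat"
  let ?prj2 = "proj_mat n ?N k :: 'a mat" and ?prj3 = "proj_mat k ?N (k + n) :: 'a mat"
  have prj2_inc1: "?prj2 * ?inc1 = 0\<^sub>m n k" and prj2_inc2: "?prj2 * ?inc2 = 1\<^sub>m n"
    and prj3_inc1: "?prj3 * ?inc1 = 0\<^sub>m k k" and prj3_inc2: "?prj3 * ?inc2 = 0\<^sub>m k n"
    by (simp_all add: proj_mat_mult_transpose_self proj_mat_mult_transpose_disjoint)
  have inc1: "?inc1 \<in> carrier_mat ?N k" and inc2: "?inc2 \<in> carrier_mat ?N n"
    and prj2: "?prj2 \<in> carrier_mat n ?N" and prj3: "?prj3 \<in> carrier_mat k ?N"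
    and Mt: "M\<^sup>T \<in> carrier_mat n k" and M't: "M'\<^sup>T \<in> carrier_mat n k"
    using M M' by auto
  have summands: "?inc1 * M * ?prj2 \<in> carrier_mat ?N ?N" "?inc2 * M\<^sup>T * ?prj3 \<in> carrier_mat ?N ?N"
    "?inc1 * M' * ?prj2 \<in> carrier_mat ?N ?N" "?inc2 * M'\<^sup>T * ?prj3 \<in> carrier_mat ?N ?N"
    using inc1 inc2 prj2 prj3 M M' Mt M't by (meson mult_carrier_mat)+
  have "upper_block_mat k n M * upper_block_mat k n M' =
      ?inc1 * M * ?prj2 * (?inc1 * M' * ?prj2) + ?inc2 * M\<^sup>T * ?prj3 * (?inc1 * M' * ?prj2) +
     (?inc1 * M * ?prj2 * (?inc2 * M'\<^sup>T * ?prj3) + ?inc2 * M\<^sup>T * ?prj3 * (?inc2 * M'\<^sup>T * ?prj3))"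
    unfolding upper_block_mat_def using summands
    by (simp add: add_mult_distrib_mat[of _ ?N ?N] mult_add_distrib_mat[of _ ?N ?N])
  also have "\<dots> = ?inc1 * (M * M'\<^sup>T) * ?prj3"
    using inc1 inc2 prj2 prj3 M M' Mt M't mult_carrier_mat[OF mult_carrier_mat[OF inc1 mult_carrier_mat[OF M M't]] prj3]
    by (simp add: mult_sandwich_mat[OF inc1 M prj2 inc1 M' prj2] mult_sandwich_mat[OF inc2 Mt prj3 inc1 M' prj2]
        mult_sandwich_mat[OF inc1 M prj2 inc2 M't prj3] mult_sandwich_mat[OF inc2 Mt prj3 inc2 M't prj3]
        prj2_inc1 prj2_inc2 prj3_inc1 prj3_inc2)
  finally show ?thesis .
qed

lemma upper_block_mat_mult_mult:
  fixes M M' M'' :: "'a :: comm_ring_1 mat"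
  assumes M: "M \<in> carrier_mat k n" and M': "M' \<in> carrier_mat k n" and M'': "M'' \<in> carrier_mat k n"
  shows "upper_block_mat k n M * upper_block_mat k n M' * upper_block_mat k n M'' =
    0\<^sub>m (n + 2*k) (n + 2*k)"
proof -
  let ?N = "n + 2*k"
  let ?inc1 = "(proj_mat k ?N 0)\<^sup>T :: 'a mat" and ?inc2 = "(proj_mat n ?N k)\<^sup>T :: 'a mat"
  let ?prj2 = "proj_mat n ?N k :: 'a mat" and ?prj3 = "proj_mat k ?N (k + n) :: 'a mat"
  have prj3_inc1: "?prj3 * ?inc1 = 0\<^sub>m k k" and prj3_inc2: "?prj3 * ?inc2 = 0\<^sub>m k n"
    by (simp_all add: proj_mat_mult_transpose_disjoint)
  have inc1: "?inc1 \<in> carrier_mat ?N k" and inc2: "?inc2 \<in> carrier_mat ?N n"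
    and prj2: "?prj2 \<in> carrier_mat n ?N" and prj3: "?prj3 \<in> carrier_mat k ?N"
    and MM': "M * M'\<^sup>T \<in> carrier_mat k k" and M''t: "M''\<^sup>T \<in> carrier_mat n k"
    using M M' M'' by auto
  have summands: "?inc1 * M'' * ?prj2 \<in> carrier_mat ?N ?N" "?inc2 * M''\<^sup>T * ?prj3 \<in> carrier_mat ?N ?N"
    and left: "?inc1 * (M * M'\<^sup>T) * ?prj3 \<in> carrier_mat ?N ?N"
    using inc1 inc2 prj2 prj3 M'' M''t MM' by (meson mult_carrier_mat)+
  have "upper_block_mat k n M * upper_block_mat k n M' * upper_block_mat k n M'' =
      ?inc1 * (M * M'\<^sup>T) * ?prj3 * (?inc1 * M'' * ?prj2) + ?inc1 * (M * M'\<^sup>T) * ?prj3 * (?inc2 * M''\<^sup>T * ?prj3)"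
    unfolding upper_block_mat_mult[OF M M'] unfolding upper_block_mat_def
    using left summands by (simp add: mult_add_distrib_mat[of _ ?N ?N])
  also have "\<dots> = 0\<^sub>m ?N ?N"
    using inc1 inc2 prj2 prj3 M M' MM' M'' M''t
    by (simp add: mult_sandwich_mat[OF inc1 MM' prj3 inc1 M'' prj2] mult_sandwich_mat[OF inc1 MM' prj3 inc2 M''t prj3]
        prj3_inc1 prj3_inc2)
  finally show ?thesis .
qed

lemma upper_block_mat_square:
  fixes M :: "'a :: comm_ring_1 mat"
  assumes M: "M \<in> carrier_mat k n" and orth: "M * M\<^sup>T = 1\<^sub>m k"
  shows "upper_block_mat k n M ^\<^sub>m 2 = proj_mat (n + 2*k) (n + 2*k) (k + n)"
proof -
  have "upper_block_mat k n M ^\<^sub>m 2 = upper_block_mat k n M * upper_block_mat k n M"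
    using upper_block_mat_carrier[OF M] by (simp add: numeral_2_eq_2)
  also have "\<dots> = (proj_mat k (n + 2*k) 0)\<^sup>T * proj_mat k (n + 2*k) (k + n)"
    by (simp add: upper_block_mat_mult[OF M M] orth)
  also have "\<dots> = proj_mat (n + 2*k) (n + 2*k) (k + n)"
    by (simp add: transpose_proj_mat_mult_proj_mat)
  finally show ?thesis .
qed

lemma upper_block_mat_cube:
  "M \<in> carrier_mat k n \<Longrightarrow> upper_block_mat k n M ^\<^sub>m 3 = 0\<^sub>m (n + 2*k) (n + 2*k)"
  using upper_block_mat_carrier[of M k n] upper_block_mat_mult_mult[of M k n M M]
  by (simp add: numeral_3_eq_3)

lemma upper_block_mat_anticommute:
  fixes M M' :: "'a :: comm_ring_1 mat"
  assumes M: "M \<in> carrier_mat k n" and M': "M' \<in> carrier_mat k n"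
    and anti: "M * M'\<^sup>T = - (M' * M\<^sup>T)"
  shows "upper_block_mat k n M * upper_block_mat k n M' = - (upper_block_mat k n M' * upper_block_mat k n M)"
  using M M' by (simp add: upper_block_mat_mult anti)

theorem proposition6p2:
  fixes k n :: nat and A :: "nat \<Rightarrow> complex mat"
  assumes "k > 0" and "n > 0"
    and "\<forall>i<k. A i \<in> carrier_mat k n"
    and "\<forall>i<k. A i * (A i)\<^sup>T = 1\<^sub>m k"
    and "\<forall>i<k. \<forall>j<k. i \<noteq> j \<longrightarrow> A i * (A j)\<^sup>T = - (A j * (A i)\<^sup>T)"
  shows "\<exists>e :: nat \<Rightarrow> complex mat.
           (\<forall>i<k. e i \<in> carrier_mat (n + 2*k) (n + 2*k)) \<and>
           (\<forall>i<k. \<forall>j<k. i \<noteq> j \<longrightarrow> e i * e j = - (e j * e i)) \<and>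
           (\<forall>i<k. vec_space.rank (n + 2*k) (e i ^\<^sub>m 2) = k) \<and>
           (\<forall>i<k. \<forall>j<k. e i ^\<^sub>m 2 = e j ^\<^sub>m 2) \<and>
           (\<forall>i<k. e i ^\<^sub>m 3 = 0\<^sub>m (n + 2*k) (n + 2*k))"
proof (intro exI[of _ "\<lambda>i. upper_block_mat k n (A i)"] conjI allI impI)
  fix i j assume i: "i < k" and j: "j < k"
  have Ai: "A i \<in> carrier_mat k n" and Aj: "A j \<in> carrier_mat k n"
    using assms(3) i j by blast+
  have sq: "upper_block_mat k n (A l) ^\<^sub>m 2 = proj_mat (n + 2*k) (n + 2*k) (k + n)" if "l < k" for l
    using assms(3,4) that by (simp add: upper_block_mat_square)
  show "upper_block_mat k n (A i) \<in> carrier_mat (n + 2*k) (n + 2*k)"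
    using Ai by (rule upper_block_mat_carrier)
  show "upper_block_mat k n (A i) ^\<^sub>m 3 = 0\<^sub>m (n + 2*k) (n + 2*k)"
    using Ai by (rule upper_block_mat_cube)
  show "vec_space.rank (n + 2*k) (upper_block_mat k n (A i) ^\<^sub>m 2) = k"
    using sq[OF i] by (simp add: rank_proj_mat)
  show "upper_block_mat k n (A i) ^\<^sub>m 2 = upper_block_mat k n (A j) ^\<^sub>m 2"
    using sq[OF i] sq[OF j] by simp
  assume "i \<noteq> j"
  with assms(5) i j have "A i * (A j)\<^sup>T = - (A j * (A i)\<^sup>T)" by blast
  then show "upper_block_mat k n (A i) * upper_block_mat k n (A j) =
      - (upper_block_mat k n (A j) * upper_block_mat k n (A i))"
    by (rule upper_block_mat_anticommute[OF Ai Aj])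
qed

end
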